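(* Let $A\in\mathbb{R}^{n\times n}$ be Hurwitz, $B\in\mathbb{R}^{n\times m}$, $C\in\mathbb{R}^{m\times n}$, $D\in\mathbb{R}^{m\times m}$ with $\|D\|<1$, and let $\Sigma$ be the system $\dot{\mathbf{x}}(t)=A\mathbf{x}(t)+B\,\Phi\circ(I-D\Phi)^{-1}(C\mathbf{x}(t))$. Primal LMI: find a positive definite $P\in\mathbb{S}^n$ and $\Pi\in\boldsymbol{\Pi}_{\mathcal{NN}}$ such that $$\begin{bmatrix} PA+A^TP & PB\\ B^TP & 0\end{bmatrix}+\begin{bmatrix} C & D\\ 0 & I_m\end{bmatrix}^T\Pi\begin{bmatrix} C & D\\ 0 & I_m\end{bmatrix}\prec 0.$$ Dual LMI: find a nonzero positive semidefinite $H=\begin{bmatrix}H_{11}&H_{12}\\H_{12}^T&H_{22}\end{bmatrix}\in\mathbb{S}^{n+m}$ (with $H_{11}\in\mathbb{S}^n$, $H_{22}\in\mathbb{S}^m$) such that $$AH_{11}+BH_{12}^T+(AH_{11}+BH_{12}^T)^T\succeq 0,$$ $$\begin{bmatrix}-C & I_m-D\\ 0 & I_m\end{bmatrix}H\begin{bmatrix}-C & I_m-D\\ 0 & I_m\end{bmatrix}^T\ \text{is entrywise nonnegative},$$ $$\mathrm{diag}\big(-CH_{12}+(I_m-D)H_{22}\big)=0.$$ Then $\Sigma$ is globally asymptotically stable if the primal LMI is feasible. Moreover, the primal LMI is infeasible if and only if the dual LMI is feasible.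
   Context: $\|D\|$ is the spectral norm; $\Phi$ is the componentwise ReLU $\Phi(q)_i=\max(q_i,0)$; $(I-D\Phi)^{-1}$ is the inverse of the bijection $q\mapsto q-D\Phi(q)$ of $\mathbb{R}^m$ (well defined when $\|D\|<1$). Global asymptotic stability of the origin means: for each $\varepsilon>0$ there is $\delta>0$ with $\|\mathbf{x}(0)\|<\delta\Rightarrow\|\mathbf{x}(t)\|<\varepsilon$ for all $t\ge 0$, and $\lim_{t\to\infty}\mathbf{x}(t)=0$ for every initial state. $\mathbb{S}^k$ is the set of real symmetric $k\times k$ matrices; $\mathrm{diag}(M)$ is the vector of diagonal entries of a square matrix $M$. $\mathcal{NN}^{2m}$ is the set of symmetric $2m\times 2m$ matrices with all entries nonnegative. $\boldsymbol{\Pi}_{\mathcal{NN}}:=\{E^T(Q+\mathcal{J}(J))E:\ J\in\mathbb{R}^{m\times m}\text{ diagonal},\ Q\in\mathcal{NN}^{2m}\}$, where $E=\begin{bmatrix}-I_m & I_m\\ 0 & I_m\end{bmatrix}$ and $\mathcal{J}(J)=\begin{bmatrix}0 & J\\ J & 0\end{bmatrix}$. *)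

theory Defs
  imports "HOL-Analysis.Analysis"
begin

text \<open>Matrices are HOL-Analysis Cartesian matrices: a p x q real matrix is of type
  real^'q^'p (rows indexed by 'p). Block indices use sum types: 'a::finite + 'b.\<close>

definition block ::
  "real^'c^'a \<Rightarrow> real^'d^'a \<Rightarrow> real^'c^'b \<Rightarrow> real^'d^'b \<Rightarrow> real^('c::finite + 'd::finite)^('a::finite + 'b::finite)" where
  "block X Y Z W = (\<chi> i j. (case i of
       Inl a \<Rightarrow> (case j of Inl c \<Rightarrow> X $ a $ c | Inr d \<Rightarrow> Y $ a $ d)
     | Inr b \<Rightarrow> (case j of Inl c \<Rightarrow> Z $ b $ c | Inr d \<Rightarrow> W $ b $ d)))"

definition blk11 :: "real^('c::finite + 'd::finite)^('a::finite + 'b::finite) \<Rightarrow> real^'c^'a" where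
  "blk11 H = (\<chi> i j. H $ Inl i $ Inl j)"
definition blk12 :: "real^('c::finite + 'd::finite)^('a::finite + 'b::finite) \<Rightarrow> real^'d^'a" where
  "blk12 H = (\<chi> i j. H $ Inl i $ Inr j)"
definition blk22 :: "real^('c::finite + 'd::finite)^('a::finite + 'b::finite) \<Rightarrow> real^'d^'b" where
  "blk22 H = (\<chi> i j. H $ Inr i $ Inr j)"

definition symmetric_mat :: "real^'n^'n \<Rightarrow> bool" where
  "symmetric_mat M \<longleftrightarrow> transpose M = M"

definition pos_def :: "real^'n^'n \<Rightarrow> bool" where
  "pos_def M \<longleftrightarrow> symmetric_mat M \<and> (\<forall>x. x \<noteq> 0 \<longrightarrow> x \<bullet> (M *v x) > 0)"

definition neg_def :: "real^'n^'n \<Rightarrow> bool" where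
  "neg_def M \<longleftrightarrow> symmetric_mat M \<and> (\<forall>x. x \<noteq> 0 \<longrightarrow> x \<bullet> (M *v x) < 0)"

definition pos_semidef :: "real^'n^'n \<Rightarrow> bool" where
  "pos_semidef M \<longleftrightarrow> symmetric_mat M \<and> (\<forall>x. x \<bullet> (M *v x) \<ge> 0)"

definition entrywise_nonneg :: "real^'c^'a \<Rightarrow> bool" where
  "entrywise_nonneg M \<longleftrightarrow> (\<forall>i j. M $ i $ j \<ge> 0)"

definition diagonal_mat :: "real^'n^'n \<Rightarrow> bool" where
  "diagonal_mat J \<longleftrightarrow> (\<forall>i j. i \<noteq> j \<longrightarrow> J $ i $ j = 0)"

definition hurwitz :: "real^'n^'n \<Rightarrow> bool" where
  "hurwitz A \<longleftrightarrow> (\<forall>(lam::complex) (v::complex^'n). v \<noteq> 0 \<and>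
      (\<chi> i j. complex_of_real (A $ i $ j)) *v v = lam *s v \<longrightarrow> Re lam < 0)"

definition spec_norm :: "real^'m^'k \<Rightarrow> real" where
  "spec_norm D = onorm (\<lambda>x. D *v x)"

definition relu :: "real^'m \<Rightarrow> real^'m" where
  "relu q = (\<chi> i. max (q $ i) 0)"

definition inv_IDPhi :: "real^'m^'m \<Rightarrow> real^'m \<Rightarrow> real^'m" where
  "inv_IDPhi D = inv (\<lambda>q. q - D *v relu q)"

definition nonlin :: "real^'m^'m \<Rightarrow> real^'m \<Rightarrow> real^'m" where
  "nonlin D q = relu (inv_IDPhi D q)"

definition is_solution ::
  "real^'n^'n \<Rightarrow> real^'m^'n \<Rightarrow> real^'n^'m \<Rightarrow> real^'m^'m \<Rightarrow> (real \<Rightarrow> real^'n) \<Rightarrow> bool" where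
  "is_solution A B C D x \<longleftrightarrow> (\<forall>t\<ge>0.
      (x has_vector_derivative (A *v x t + B *v nonlin D (C *v x t))) (at t within {0..}))"

definition globally_asymptotically_stable ::
  "real^'n^'n \<Rightarrow> real^'m^'n \<Rightarrow> real^'n^'m \<Rightarrow> real^'m^'m \<Rightarrow> bool" where
  "globally_asymptotically_stable A B C D \<longleftrightarrow>
     (\<forall>\<epsilon>>0. \<exists>\<delta>>0. \<forall>x. is_solution A B C D x \<and> norm (x 0) < \<delta> \<longrightarrow> (\<forall>t\<ge>0. norm (x t) < \<epsilon>))
   \<and> (\<forall>x. is_solution A B C D x \<longrightarrow> (x \<longlongrightarrow> 0) at_top)"

definition E_mat :: "real^('m::finite + 'm)^('m + 'm)" where
  "E_mat = block (- mat 1) (mat 1) 0 (mat 1)"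

definition Jblk :: "real^'m::finite^'m \<Rightarrow> real^('m::finite + 'm)^('m + 'm)" where
  "Jblk (J::real^'m::finite^'m) = block 0 J J 0"

definition Pi_NN :: "(real^('m::finite + 'm)^('m + 'm)) set" where
  "Pi_NN = {transpose E_mat ** (Q + Jblk J) ** E_mat | J Q.
              diagonal_mat J \<and> symmetric_mat Q \<and> entrywise_nonneg Q}"

definition primal_LMI_feasible ::
  "real^'n^'n \<Rightarrow> real^'m^'n \<Rightarrow> real^'n^'m \<Rightarrow> real^'m^'m \<Rightarrow> bool" where
  "primal_LMI_feasible A B C D \<longleftrightarrow> (\<exists>P Pi. pos_def P \<and> Pi \<in> Pi_NN \<and>
     neg_def (block (P ** A + transpose A ** P) (P ** B) (transpose B ** P) 0
              + transpose (block C D 0 (mat 1)) ** Pi ** block C D 0 (mat 1)))"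

definition dual_LMI_feasible ::
  "real^'n^'n \<Rightarrow> real^'m^'n \<Rightarrow> real^'n^'m \<Rightarrow> real^'m^'m \<Rightarrow> bool" where
  "dual_LMI_feasible A B C D \<longleftrightarrow> (\<exists>H :: real^('n::finite + 'm::finite)^('n + 'm).
     H \<noteq> 0 \<and> pos_semidef H \<and>
     pos_semidef (A ** blk11 H + B ** transpose (blk12 H)
                  + transpose (A ** blk11 H + B ** transpose (blk12 H))) \<and>
     entrywise_nonneg (block (- C) (mat 1 - D) 0 (mat 1) ** H
                       ** transpose (block (- C) (mat 1 - D) 0 (mat 1))) \<and>
     (\<forall>i. (- (C ** blk12 H) + (mat 1 - D) ** blk22 H) $ i $ i = 0))"

end

theory Submission
  imports Defs "HOL-Real_Asymp.Real_Asymp"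
begin

(* Along a trajectory put w = Phi((I - D Phi)^-1 (C x)) and q = C x + D w. Then w = relu q, so
   E (q, w) = (w - q, w) is a pair of nonnegative vectors with disjoint supports, on which every
   Q + J(J) with Q entrywise nonnegative and J diagonal has a nonnegative quadratic form. Hence each
   Pi in Pi_NN is nonnegative on [C D; 0 I] (x, w), and testing the primal LMI at (x, w) gives
   d/dt x'Px <= -e |x|^2: x'Px is a quadratic Lyapunov function with exponential decay.

   Write F(P, Pi) for the LMI matrix, which is linear in (P, Pi). Up to scaling, the primal LMI is
   feasible iff (-I, -I) lies in the convex cone of all (S1 - P, F(P, Pi) + S2) with P symmetric,
   Pi in Pi_NN and S1, S2 with nonnegative quadratic forms. If it does not, a separating
   hyperplane (Z, H) gives the dual certificate: testing it against the generators of the cone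
   shows that H is positive semidefinite, that Z = A H11 + B H12' + (A H11 + B H12')' is positive
   semidefinite, and that [-C I-D; 0 I] H [-C I-D; 0 I]' lies in the dual cone of the multipliers
   Q + J(J), which means entrywise nonnegativity and a vanishing diagonal of its off-diagonal
   block. Conversely, the same adjoint identities give <F(P, Pi), H> >= 0 for primal and dual
   solutions, whereas F(P, Pi) negative definite and H nonzero positive semidefinite give
   <F(P, Pi), H> < 0. *)

section \<open>Matrix algebra and block matrices\<close>

lemma sum_UNIV_Inl_Inr:
  fixes f :: "'a::finite + 'b::finite \<Rightarrow> 'c::comm_monoid_add"
  shows "(\<Sum>i\<in>UNIV. f i) = (\<Sum>a\<in>UNIV. f (Inl a)) + (\<Sum>b\<in>UNIV. f (Inr b))"
  by (subst UNIV_Plus_UNIV[symmetric], subst sum.Plus) (simp_all add: comp_def)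

definition join :: "real^'a::finite \<Rightarrow> real^'b::finite \<Rightarrow> real^('a + 'b)" where
  "join u v = (\<chi> i. case i of Inl a \<Rightarrow> u $ a | Inr b \<Rightarrow> v $ b)"

lemma join_Inl [simp]: "join u v $ Inl a = u $ a"
  and join_Inr [simp]: "join u v $ Inr b = v $ b"
  by (simp_all add: join_def)

lemma inner_join: "join a b \<bullet> join c d = a \<bullet> c + b \<bullet> d"
  by (simp add: inner_vec_def sum_UNIV_Inl_Inr)

lemma norm_join_power2: "norm (join a b) ^ 2 = norm a ^ 2 + norm b ^ 2"
  by (simp add: power2_norm_eq_inner inner_join)

lemma block_Inl_Inl [simp]: "block X Y Z W $ Inl a $ Inl c = X $ a $ c"
  and block_Inl_Inr [simp]: "block X Y Z W $ Inl a $ Inr d = Y $ a $ d"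
  and block_Inr_Inl [simp]: "block X Y Z W $ Inr b $ Inl c = Z $ b $ c"
  and block_Inr_Inr [simp]: "block X Y Z W $ Inr b $ Inr d = W $ b $ d"
  by (simp_all add: block_def)

definition blk21 :: "real^('c::finite + 'd::finite)^('a::finite + 'b::finite) \<Rightarrow> real^'c^'b" where
  "blk21 H = (\<chi> i j. H $ Inr i $ Inl j)"

lemma block_blk: "block (blk11 H) (blk12 H) (blk21 H) (blk22 H) = H"
  by (simp add: vec_eq_iff block_def blk11_def blk12_def blk21_def blk22_def split: sum.splits)

lemma blk_block [simp]:
  "blk11 (block X Y Z W) = X" "blk12 (block X Y Z W) = Y"
  "blk21 (block X Y Z W) = Z" "blk22 (block X Y Z W) = W"
  by (simp_all add: vec_eq_iff blk11_def blk12_def blk21_def blk22_def)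

lemma block_mult_join:
  "block X Y Z W *v join u v = join (X *v u + Y *v v) (Z *v u + W *v v)"
  by (simp add: vec_eq_iff join_def block_def matrix_vector_mult_def sum_UNIV_Inl_Inr
      split: sum.splits)

lemma block_mult:
  "block X Y Z W ** block X' Y' Z' W'
     = block (X ** X' + Y ** Z') (X ** Y' + Y ** W') (Z ** X' + W ** Z') (Z ** Y' + W ** W')"
  by (simp add: vec_eq_iff block_def matrix_matrix_mult_def sum_UNIV_Inl_Inr split: sum.splits)

lemma block_add:
  "block X Y Z W + block X' Y' Z' W' = block (X + X') (Y + Y') (Z + Z') (W + W')"
  by (simp add: vec_eq_iff block_def split: sum.splits)

lemma block_scaleR:
  "c *\<^sub>R block X Y Z W = block (c *\<^sub>R X) (c *\<^sub>R Y) (c *\<^sub>R Z) (c *\<^sub>R W)"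
  by (simp add: vec_eq_iff block_def split: sum.splits)

lemma block_zero [simp]: "block 0 0 0 0 = 0"
  by (simp add: block_def vec_eq_iff split: sum.splits)

lemma transpose_block:
  "transpose (block X Y Z W) = block (transpose X) (transpose Z) (transpose Y) (transpose W)"
  by (simp add: vec_eq_iff transpose_def block_def split: sum.splits)

lemma transpose_add: "transpose (A + B) = transpose A + transpose (B::real^'b::finite^'a::finite)"
  by (simp add: transpose_def vec_eq_iff)

lemma transpose_uminus: "transpose (- A) = - transpose (A::real^'b::finite^'a::finite)"
  by (simp add: transpose_def vec_eq_iff)

lemma transpose_diff: "transpose (A - B) = transpose A - transpose (B::real^'b::finite^'a::finite)"
  by (simp add: transpose_def vec_eq_iff)

lemma transpose_zero [simp]: "transpose (0::real^'b::finite^'a::finite) = 0"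
  by (simp add: transpose_def vec_eq_iff)

lemma matrix_add_rdistrib: "(A + B) ** C = A ** C + B ** (C::real^'c::finite^'b::finite)"
  by (simp add: matrix_matrix_mult_def vec_eq_iff distrib_right sum.distrib)

lemma matrix_scaleR_left: "(k *\<^sub>R A) ** B = k *\<^sub>R (A ** (B::real^'c::finite^'b::finite))"
  by (simp add: scalar_matrix_assoc)

lemma matrix_scaleR_right: "A ** (k *\<^sub>R B) = k *\<^sub>R (A ** (B::real^'c::finite^'b::finite))"
  by (simp add: matrix_matrix_mult_def vec_eq_iff sum_distrib_left mult_ac)

lemma matrix_uminus_left: "(- A) ** B = - (A ** (B::real^'c::finite^'b::finite))"
  by (simp add: matrix_matrix_mult_def vec_eq_iff sum_negf)

lemma matrix_vector_uminus_left: "(- A) *v x = - (A *v (x::real^'a::finite))"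
  by (simp add: matrix_vector_mult_def vec_eq_iff sum_negf)

lemma transpose_congruence:
  "transpose (transpose N ** G ** N) = transpose N ** transpose G ** (N::real^'a::finite^'b::finite)"
  by (simp only: matrix_transpose_mul transpose_transpose matrix_mul_assoc)

lemma symmetric_congruence:
  "symmetric_mat G \<Longrightarrow> symmetric_mat (transpose N ** G ** (N::real^'a::finite^'b::finite))"
  by (simp add: symmetric_mat_def transpose_congruence)

section \<open>The Frobenius inner product\<close>

lemma inner_matrix: "X \<bullet> Y = (\<Sum>i\<in>UNIV. \<Sum>j\<in>UNIV. X $ i $ j * Y $ i $ j)"
  for X Y :: "real^'c::finite^'a::finite"
  by (simp add: inner_vec_def)

lemma inner_transpose: "transpose X \<bullet> transpose Y = X \<bullet> (Y::real^'c::finite^'a::finite)"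
  unfolding inner_matrix transpose_def by simp (subst sum.swap, simp)

lemma inner_transpose_swap: "transpose X \<bullet> Y = X \<bullet> transpose (Y::real^'c::finite^'a::finite)"
  using inner_transpose[of X "transpose Y"] by simp

lemma inner_matrix_mult_right: "X \<bullet> (Y ** B) = (X ** transpose B) \<bullet> Y"
  for X :: "real^'c::finite^'a::finite" and B :: "real^'c^'b::finite"
  unfolding inner_matrix transpose_def matrix_matrix_mult_def
  by (simp add: sum_distrib_left sum_distrib_right, rule sum.cong[OF refl], subst sum.swap)
    (simp add: ac_simps)

lemma inner_matrix_mult_left: "X \<bullet> (A ** Y) = (transpose A ** X) \<bullet> Y"
  for X :: "real^'c::finite^'a::finite" and A :: "real^'b::finite^'a"
proof -
  have "X \<bullet> (A ** Y) = transpose X \<bullet> transpose (A ** Y)"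
    by (rule inner_transpose[symmetric])
  also have "\<dots> = transpose (transpose A ** X) \<bullet> transpose Y"
    by (simp only: matrix_transpose_mul inner_matrix_mult_right transpose_transpose)
  finally show ?thesis by (simp only: inner_transpose)
qed

lemma inner_congruence: "H \<bullet> (transpose N ** G ** N) = (N ** H ** transpose N) \<bullet> G"
  for H :: "real^'a::finite^'a" and N :: "real^'a^'b::finite"
proof -
  have "H \<bullet> (transpose N ** G ** N) = (H ** transpose N) \<bullet> (transpose N ** G)"
    by (rule inner_matrix_mult_right)
  also have "\<dots> = (N ** H ** transpose N) \<bullet> G"
    by (simp only: inner_matrix_mult_left transpose_transpose matrix_mul_assoc)
  finally show ?thesis .
qed

lemma inner_block:
  "block X Y Z U \<bullet> block X' Y' Z' U' = X \<bullet> X' + Y \<bullet> Y' + Z \<bullet> Z' + U \<bullet> U'"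
  by (simp add: inner_matrix sum_UNIV_Inl_Inr sum.distrib)

lemma inner_unit_matrix: "X \<bullet> axis i (axis j 1) = X $ i $ j"
  for X :: "real^'b::finite^'a::finite"
  by (simp add: inner_axis)

section \<open>Quadratic forms and semidefinite matrices\<close>

lemma inner_transpose_matrix_vector: "x \<bullet> (transpose A *v y) = (A *v x) \<bullet> y"
  for A :: "real^'b::finite^'a::finite"
proof -
  have "x \<bullet> (transpose A *v y) = (y v* A) \<bullet> x" by (simp add: inner_commute)
  also have "\<dots> = y \<bullet> (A *v x)" by (rule dot_lmul_matrix)
  finally show ?thesis by (simp add: inner_commute)
qed

lemma symmetric_inner:
  assumes "symmetric_mat P"
  shows "u \<bullet> (P *v v) = v \<bullet> (P *v (u::real^'a::finite))"
proof -
  have "u \<bullet> (P *v v) = u \<bullet> (transpose P *v v)" using assms by (simp add: symmetric_mat_def)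
  also have "\<dots> = (P *v u) \<bullet> v" by (rule inner_transpose_matrix_vector)
  finally show ?thesis by (simp add: inner_commute)
qed

lemma quadratic_form_congruence:
  "v \<bullet> ((transpose N ** G ** N) *v v) = (N *v v) \<bullet> (G *v (N *v v))"
  for N :: "real^'a::finite^'b::finite"
  by (simp only: matrix_vector_mul_assoc[symmetric] inner_transpose_matrix_vector)

lemma quadratic_form_scaleR: "(c *\<^sub>R x) \<bullet> (P *v (c *\<^sub>R x)) = c^2 * (x \<bullet> (P *v x))"
  for P :: "real^'n::finite^'n"
  by (simp add: matrix_vector_mult_scaleR power2_eq_square)

lemma matrix_vector_mult_axis: "(P *v axis j 1) $ i = P $ i $ j"
proof -
  have "(P *v axis j 1) $ i = (\<Sum>l\<in>UNIV. P $ i $ l * (if l = j then 1 else 0))"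
    by (simp add: matrix_vector_mult_def axis_def)
  also have "\<dots> = P $ i $ j" by (simp add: if_distrib cong: if_cong)
  finally show ?thesis .
qed

lemma quadratic_form_axis: "axis i 1 \<bullet> (P *v axis j 1) = P $ i $ j"
  for P :: "real^'n::finite^'n"
  by (simp add: inner_axis' matrix_vector_mult_axis)

lemma quadratic_form_add:
  "(a + b) \<bullet> (P *v (a + b)) = a \<bullet> (P *v a) + a \<bullet> (P *v b) + b \<bullet> (P *v a) + b \<bullet> (P *v b)"
  for P :: "real^'n::finite^'n"
  by (simp add: matrix_vector_right_distrib inner_add_left inner_add_right)

lemma quadratic_form_coercive:
  fixes P :: "real^'n::finite^'n"
  assumes pos: "\<And>x. x \<noteq> 0 \<Longrightarrow> x \<bullet> (P *v x) > 0"
  obtains e where "e > 0" "\<And>x. e * norm x ^ 2 \<le> x \<bullet> (P *v x)"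
proof -
  have "sphere (0::real^'n) 1 \<noteq> {}"
    using norm_axis_1[of undefined] by (metis mem_sphere_0 empty_iff)
  moreover have "continuous_on (sphere 0 1) (\<lambda>x. x \<bullet> (P *v x))"
    by (intro continuous_intros)
  ultimately obtain x0 where x0: "x0 \<in> sphere 0 1"
    "\<And>y. y \<in> sphere 0 1 \<Longrightarrow> x0 \<bullet> (P *v x0) \<le> y \<bullet> (P *v y)"
    using continuous_attains_inf[OF compact_sphere] by blast
  have bound: "x0 \<bullet> (P *v x0) * norm x ^ 2 \<le> x \<bullet> (P *v x)" for x
  proof (cases "x = 0")
    case False
    define u where "u = (1 / norm x) *\<^sub>R x"
    have "norm x *\<^sub>R u = x" using False by (simp add: u_def)
    then have "x \<bullet> (P *v x) = norm x ^ 2 * (u \<bullet> (P *v u))"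
      using quadratic_form_scaleR[of "norm x" u P] by simp
    moreover have "x0 \<bullet> (P *v x0) \<le> u \<bullet> (P *v u)" using False by (intro x0(2)) (simp add: u_def)
    ultimately show ?thesis
      using mult_right_mono[of "x0 \<bullet> (P *v x0)" "u \<bullet> (P *v u)" "norm x ^ 2"]
      by (simp add: mult.commute)
  qed simp
  have "x0 \<bullet> (P *v x0) > 0" using x0(1) by (intro pos) auto
  then show ?thesis using bound by (rule that)
qed

lemma quadratic_form_bounded: "\<bar>x \<bullet> (P *v x)\<bar> \<le> onorm ((*v) P) * norm x ^ 2"
  for P :: "real^'n::finite^'n"
proof -
  have "\<bar>x \<bullet> (P *v x)\<bar> \<le> norm x * norm (P *v x)"
    by (rule Cauchy_Schwarz_ineq2)
  also have "\<dots> \<le> norm x * (onorm ((*v) P) * norm x)"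
    by (simp add: mult_left_mono onorm matrix_vector_mul_bounded_linear)
  finally show ?thesis by (simp add: power2_eq_square mult_ac)
qed

definition nonneg_form :: "real^'a::finite^'a \<Rightarrow> bool" where
  "nonneg_form S \<longleftrightarrow> (\<forall>x. 0 \<le> x \<bullet> (S *v x))"

lemma pos_semidef_iff: "pos_semidef M \<longleftrightarrow> symmetric_mat M \<and> nonneg_form M"
  by (simp add: pos_semidef_def nonneg_form_def)

lemma nonneg_form_add: "nonneg_form S \<Longrightarrow> nonneg_form S' \<Longrightarrow> nonneg_form (S + S')"
  by (simp add: nonneg_form_def matrix_vector_mult_add_rdistrib inner_add_right add_nonneg_nonneg)

lemma nonneg_form_scaleR: "nonneg_form S \<Longrightarrow> 0 \<le> k \<Longrightarrow> nonneg_form (k *\<^sub>R S)"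
  by (simp add: nonneg_form_def scaleR_matrix_vector_assoc[symmetric])

lemma nonneg_form_antisymmetric:
  assumes "transpose K = - K"
  shows "nonneg_form K"
proof -
  have "x \<bullet> (K *v x) = x \<bullet> (transpose K *v x)" for x
    by (simp only: inner_transpose_matrix_vector inner_commute)
  then have "x \<bullet> (K *v x) = 0" for x
    using assms by (simp add: matrix_vector_uminus_left)
  then show ?thesis by (simp add: nonneg_form_def)
qed

lemma pos_def_if_identity_le:
  assumes "symmetric_mat M" "nonneg_form (M - mat 1)"
  shows "pos_def M"
proof -
  have "0 < x \<bullet> (M *v x)" if "x \<noteq> 0" for x
  proof -
    have "x \<bullet> (M *v x) = x \<bullet> ((M - mat 1) *v x) + x \<bullet> x"
      by (simp add: matrix_vector_mult_diff_rdistrib inner_diff_right)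
    moreover have "0 \<le> x \<bullet> ((M - mat 1) *v x)"
      using assms(2) unfolding nonneg_form_def by blast
    moreover have "0 < x \<bullet> x" using that by simp
    ultimately show ?thesis by linarith
  qed
  then show ?thesis using assms(1) by (simp add: pos_def_def)
qed

lemma pos_def_imp_nonneg_form: "pos_def P \<Longrightarrow> nonneg_form P"
  unfolding nonneg_form_def
proof
  fix x assume "pos_def P"
  show "0 \<le> x \<bullet> (P *v x)"
  proof (cases "x = 0")
    case False
    then have "0 < x \<bullet> (P *v x)" using \<open>pos_def P\<close> by (simp add: pos_def_def)
    then show ?thesis by (rule less_imp_le)
  qed simp
qed

lemma neg_def_iff_pos_def_uminus: "neg_def M \<longleftrightarrow> pos_def (- M)"
  by (simp add: neg_def_def pos_def_def symmetric_mat_def transpose_uminus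
      matrix_vector_uminus_left)

lemma symmetric_mat_entry:
  assumes "symmetric_mat P"
  shows "P $ j $ i = P $ i $ j"
proof -
  have "P $ j $ i = transpose P $ i $ j" by (simp add: transpose_def)
  then show ?thesis using assms by (simp add: symmetric_mat_def)
qed

definition outer :: "real^'a::finite \<Rightarrow> real^'a^'a" where
  "outer v = (\<chi> i j. v $ i * v $ j)"

lemma inner_outer: "Y \<bullet> outer v = v \<bullet> (Y *v v)"
  unfolding inner_matrix outer_def inner_vec_def matrix_vector_mult_def
  by (simp add: sum_distrib_left ac_simps)

lemma outer_zero: "outer 0 = 0"
  by (simp add: outer_def vec_eq_iff)

lemma transpose_outer: "transpose (outer v) = outer v"
  by (simp add: outer_def transpose_def vec_eq_iff mult.commute)

lemma outer_scaleR: "outer (c *\<^sub>R v) = c ^ 2 *\<^sub>R outer v"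
  by (simp add: outer_def vec_eq_iff power2_eq_square)

lemma quadratic_form_outer: "x \<bullet> (outer p *v x) = (p \<bullet> x) ^ 2"
  unfolding outer_def inner_vec_def matrix_vector_mult_def power2_eq_square
  by (simp add: sum_distrib_left sum_distrib_right ac_simps)

lemma nonneg_form_zero_diagonal_row:
  fixes P :: "real^'n::finite^'n"
  assumes sym: "symmetric_mat P" and psd: "nonneg_form P" and kk: "P $ k $ k = 0"
  shows "P $ k $ j = 0"
proof (rule ccontr)
  assume ne: "P $ k $ j \<noteq> 0"
  define s where "s = - (P $ j $ j + 1) / (2 * P $ k $ j)"
  have "P $ j $ k = P $ k $ j"
    using sym by (rule symmetric_mat_entry)
  let ?v = "s *\<^sub>R axis k 1 + axis j 1"
  have "0 \<le> ?v \<bullet> (P *v ?v)" using psd unfolding nonneg_form_def by blast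
  also have "?v \<bullet> (P *v ?v) = 2 * s * P $ k $ j + P $ j $ j"
    using kk \<open>P $ j $ k = P $ k $ j\<close>
    by (simp only: quadratic_form_add quadratic_form_scaleR matrix_vector_mult_scaleR
        inner_scaleR_left inner_scaleR_right quadratic_form_axis)
  also have "\<dots> = -1" using ne by (simp add: s_def field_simps)
  finally show False by simp
qed

lemma nonneg_form_Schur_complement:
  fixes P :: "real^'n::finite^'n"
  assumes sym: "symmetric_mat P" and psd: "nonneg_form P" and kpos: "P $ k $ k > 0"
  shows "nonneg_form (P - (1 / P $ k $ k) *\<^sub>R outer (column k P))"
  unfolding nonneg_form_def
proof
  fix x :: "real^'n"
  define p where "p = column k P"
  define s where "s = (p \<bullet> x) / P $ k $ k"
  have e1: "x \<bullet> (P *v axis k 1) = p \<bullet> x"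
    by (simp add: p_def column_def inner_vec_def matrix_vector_mult_def axis_def if_distrib
        mult.commute cong: if_cong)
  have e2: "axis k 1 \<bullet> (P *v x) = p \<bullet> x"
    using e1 symmetric_inner[OF sym, of "axis k 1" x] by simp
  have "0 \<le> (x - s *\<^sub>R axis k 1) \<bullet> (P *v (x - s *\<^sub>R axis k 1))"
    using psd unfolding nonneg_form_def by blast
  also have "\<dots> = x \<bullet> (P *v x) - 2 * s * (p \<bullet> x) + s ^ 2 * P $ k $ k"
    by (simp add: matrix_vector_mult_diff_distrib inner_diff_left inner_diff_right
        matrix_vector_mult_scaleR quadratic_form_axis e1 e2 power2_eq_square)
      (simp add: algebra_simps)
  also have "\<dots> = x \<bullet> (P *v x) - (p \<bullet> x) ^ 2 / P $ k $ k"
    using kpos by (simp add: s_def field_simps power2_eq_square)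
  also have "\<dots> = x \<bullet> ((P - (1 / P $ k $ k) *\<^sub>R outer p) *v x)"
    by (simp add: matrix_vector_mult_diff_rdistrib inner_diff_right quadratic_form_outer
        scaleR_matrix_vector_assoc[symmetric])
  finally show "0 \<le> x \<bullet> ((P - (1 / P $ k $ k) *\<^sub>R outer (column k P)) *v x)"
    unfolding p_def .
qed

lemma pos_semidef_Schur_complement:
  assumes "pos_semidef P" "P $ k $ k > 0"
  shows "pos_semidef (P - (1 / P $ k $ k) *\<^sub>R outer (column k P))"
  using nonneg_form_Schur_complement[of P k] assms
  by (simp add: pos_semidef_iff symmetric_mat_def transpose_diff transpose_scalar transpose_outer)

lemma Schur_complement_entry_eq_zero:
  assumes "symmetric_mat P" "P $ k $ k \<noteq> 0" and "i = k \<or> (P $ i $ j = 0 \<and> P $ i $ k = 0)"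
  shows "(P - (1 / P $ k $ k) *\<^sub>R outer (column k P)) $ i $ j = 0"
  using assms(2,3) symmetric_mat_entry[OF assms(1), of k j] by (auto simp: outer_def column_def)

text \<open>Cholesky-type elimination: subtracting the outer product through a positive pivot
  \<open>k\<close> clears row \<open>k\<close>; a zero pivot has a zero row already.\<close>
lemma pos_semidef_sum_outer_supported:
  fixes P :: "real^'n::finite^'n"
  assumes "finite I" "pos_semidef P" "\<And>i j. P $ i $ j \<noteq> 0 \<Longrightarrow> i \<in> I"
  shows "\<exists>vs. P = sum_list (map outer vs)"
  using assms
proof (induction I arbitrary: P rule: finite_induct)
  case empty
  then have "P = 0" by (auto simp: vec_eq_iff)
  then show ?case by (intro exI[of _ "[]"]) simp
next
  case (insert k I)
  have sym: "symmetric_mat P" and psd: "nonneg_form P"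
    using insert.prems(1) by (simp_all add: pos_semidef_iff)
  have "0 \<le> axis k 1 \<bullet> (P *v axis k 1)" using psd unfolding nonneg_form_def by blast
  then consider "P $ k $ k = 0" | "P $ k $ k > 0" by (force simp: quadratic_form_axis)
  then show ?case
  proof cases
    case 1
    have "i \<in> I" if "P $ i $ j \<noteq> 0" for i j
    proof -
      have "i \<noteq> k" using that nonneg_form_zero_diagonal_row[OF sym psd 1] by auto
      then show ?thesis using that insert.prems(2) by blast
    qed
    then show ?thesis by (rule insert.IH[OF insert.prems(1)])
  next
    case 2
    define p where "p = column k P"
    define P' where "P' = P - (1 / P $ k $ k) *\<^sub>R outer p"
    have "pos_semidef P'"
      using pos_semidef_Schur_complement[OF insert.prems(1) 2] by (simp add: P'_def p_def)
    moreover have "i \<in> I" if "P' $ i $ j \<noteq> 0" for i j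
    proof (rule ccontr)
      assume "i \<notin> I"
      then have "i = k \<or> (P $ i $ j = 0 \<and> P $ i $ k = 0)" using insert.prems(2) by blast
      then show False
        using that Schur_complement_entry_eq_zero[OF sym] 2 by (simp add: P'_def p_def)
    qed
    ultimately obtain vs where "P' = sum_list (map outer vs)" using insert.IH by blast
    moreover have "P = outer ((1 / sqrt (P $ k $ k)) *\<^sub>R p) + P'"
      using 2 by (simp add: P'_def outer_scaleR power_divide)
    ultimately show ?thesis by (intro exI[of _ "((1 / sqrt (P $ k $ k)) *\<^sub>R p) # vs"]) simp
  qed
qed

lemma pos_semidef_sum_outer:
  "pos_semidef (P::real^'n::finite^'n) \<Longrightarrow> \<exists>vs. P = sum_list (map outer vs)"
  using pos_semidef_sum_outer_supported[of UNIV P] by simp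

lemma inner_sum_outer: "Y \<bullet> sum_list (map outer vs) = (\<Sum>v\<leftarrow>vs. v \<bullet> (Y *v v))"
  by (induction vs) (simp_all add: inner_add_right inner_outer)

lemma inner_pos_semidef_nonneg:
  fixes Y P :: "real^'n::finite^'n"
  assumes "nonneg_form Y" "pos_semidef P"
  shows "0 \<le> Y \<bullet> P"
proof -
  obtain vs where "P = sum_list (map outer vs)"
    using pos_semidef_sum_outer[OF assms(2)] by blast
  moreover have "0 \<le> (\<Sum>v\<leftarrow>vs. v \<bullet> (Y *v v))"
    using assms(1) by (intro sum_list_nonneg) (auto simp: nonneg_form_def)
  ultimately show ?thesis by (simp add: inner_sum_outer)
qed

lemma inner_pos_semidef_neg:
  fixes Y P :: "real^'n::finite^'n"
  assumes neg: "\<And>x. x \<noteq> 0 \<Longrightarrow> x \<bullet> (Y *v x) < 0" and "pos_semidef P" "P \<noteq> 0"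
  shows "Y \<bullet> P < 0"
proof -
  obtain vs where P: "P = sum_list (map outer vs)"
    using pos_semidef_sum_outer[OF assms(2)] by blast
  have "\<exists>v\<in>set vs. v \<noteq> 0"
  proof (rule ccontr)
    assume "\<not> (\<exists>v\<in>set vs. v \<noteq> 0)"
    then have "sum_list (map outer vs) = 0" by (induction vs) (simp_all add: outer_zero)
    then show False using \<open>P \<noteq> 0\<close> P by simp
  qed
  then obtain ys v zs where vs: "vs = ys @ v # zs" and "v \<noteq> 0"
    by (blast dest: split_list)
  have nonpos: "w \<bullet> (Y *v w) \<le> 0" for w
    by (cases "w = 0") (simp_all add: less_imp_le neg)
  have "(\<Sum>w\<leftarrow>ys. w \<bullet> (Y *v w)) \<le> 0" "(\<Sum>w\<leftarrow>zs. w \<bullet> (Y *v w)) \<le> 0"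
    by (rule sum_list_nonpos, use nonpos in auto)+
  moreover have "Y \<bullet> P = (\<Sum>w\<leftarrow>ys. w \<bullet> (Y *v w)) + v \<bullet> (Y *v v) + (\<Sum>w\<leftarrow>zs. w \<bullet> (Y *v w))"
    unfolding P inner_sum_outer vs by simp
  ultimately show ?thesis using neg[OF \<open>v \<noteq> 0\<close>] by linarith
qed

text \<open>Testing against all matrices with a nonnegative quadratic form, including the
  antisymmetric ones, forces symmetry.\<close>
lemma pos_semidef_if_dual_nonneg:
  fixes Y :: "real^'a::finite^'a"
  assumes dual: "\<And>S. nonneg_form S \<Longrightarrow> 0 \<le> Y \<bullet> S"
  shows "pos_semidef Y"
proof -
  define K where "K = Y - transpose Y"
  have skew: "transpose K = - K" by (simp add: K_def transpose_diff)
  have "0 \<le> Y \<bullet> K" by (rule dual, rule nonneg_form_antisymmetric, rule skew)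
  moreover have "0 \<le> Y \<bullet> (- K)"
    by (rule dual, rule nonneg_form_antisymmetric) (simp add: skew transpose_uminus)
  ultimately have YK: "Y \<bullet> K = 0" by simp
  have "transpose Y \<bullet> K = transpose (transpose Y) \<bullet> transpose K"
    by (rule inner_transpose[symmetric])
  also have "\<dots> = - (Y \<bullet> K)" by (simp add: skew)
  finally have "transpose Y \<bullet> K = 0" using YK by simp
  moreover have "K \<bullet> K = Y \<bullet> K - transpose Y \<bullet> K" by (simp add: K_def inner_diff_left)
  ultimately have "K \<bullet> K = 0" using YK by simp
  then have "symmetric_mat Y" by (simp add: K_def symmetric_mat_def)
  moreover have "nonneg_form Y"
    using dual[of "outer x" for x] by (simp add: nonneg_form_def inner_outer quadratic_form_outer)
  ultimately show ?thesis by (simp add: pos_semidef_iff)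
qed

section \<open>The ReLU feedback loop\<close>

lemma norm_relu_diff_le: "norm (relu p - relu q) \<le> norm (p - q)"
  by (rule norm_le_componentwise_cart) (simp add: relu_def)

text \<open>The ReLU is 1-Lipschitz, so \<open>q \<mapsto> y + D relu q\<close> is a contraction.\<close>
lemma relu_loop_solvable:
  fixes D :: "real^'m::finite^'m"
  assumes "spec_norm D < 1"
  shows "\<exists>q. q - D *v relu q = y"
proof -
  let ?c = "spec_norm D"
  have c0: "0 \<le> ?c" unfolding spec_norm_def by (rule onorm_pos_le) simp
  have "\<exists>!q. y + D *v relu q = q"
  proof (rule banach_fix_type[OF c0 assms], intro allI)
    fix p q :: "real^'m"
    have "dist (y + D *v relu p) (y + D *v relu q) = norm (D *v (relu p - relu q))"
      by (simp add: dist_norm matrix_vector_mult_diff_distrib)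
    also have "\<dots> \<le> ?c * norm (relu p - relu q)"
      unfolding spec_norm_def by (rule onorm) simp
    also have "\<dots> \<le> ?c * dist p q"
      unfolding dist_norm by (intro mult_left_mono norm_relu_diff_le c0)
    finally show "dist (y + D *v relu p) (y + D *v relu q) \<le> ?c * dist p q" .
  qed
  then obtain q where "y + D *v relu q = q" by blast
  then show ?thesis by (intro exI[of _ q]) (simp add: algebra_simps)
qed

lemma inv_IDPhi_solves:
  fixes D :: "real^'m::finite^'m"
  assumes "spec_norm D < 1"
  shows "inv_IDPhi D y - D *v relu (inv_IDPhi D y) = y"
proof -
  obtain q where "q - D *v relu q = y" using relu_loop_solvable[OF assms] by blast
  then have "y \<in> range (\<lambda>q. q - D *v relu q)" using rangeI[of "\<lambda>q. q - D *v relu q" q] by simp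
  then show ?thesis unfolding inv_IDPhi_def by (rule f_inv_into_f)
qed

lemma output_map_nonlin:
  fixes D :: "real^'m::finite^'m" and C :: "real^'n::finite^'m"
  assumes "spec_norm D < 1"
  shows "block C D 0 (mat 1) *v join x (nonlin D (C *v x))
       = join (inv_IDPhi D (C *v x)) (relu (inv_IDPhi D (C *v x)))"
  using inv_IDPhi_solves[OF assms, of "C *v x"]
  by (simp add: block_mult_join nonlin_def algebra_simps)

lemma diagonal_mat_mult_vec: "diagonal_mat J \<Longrightarrow> (J *v v) $ i = J $ i $ i * v $ i"
  unfolding diagonal_mat_def matrix_vector_mult_def
  by (simp add: sum.remove[of UNIV i] sum.neutral)

lemma complementary_multiplier_nonneg:
  fixes r w :: "real^'m::finite"
  assumes r: "\<And>i. 0 \<le> r $ i" and w: "\<And>i. 0 \<le> w $ i" and rw: "\<And>i. r $ i * w $ i = 0"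
    and J: "diagonal_mat J" and Q: "entrywise_nonneg Q"
  shows "0 \<le> join r w \<bullet> ((Q + Jblk J) *v join r w)"
proof -
  have nonneg: "0 \<le> join r w $ i" for i using r w by (cases i) simp_all
  have Q_part: "0 \<le> join r w \<bullet> (Q *v join r w)"
    unfolding inner_vec_def matrix_vector_mult_def using Q nonneg
    by (auto simp: entrywise_nonneg_def intro!: sum_nonneg mult_nonneg_nonneg)
  have zero: "r $ i * (J $ i $ i * w $ i) = 0" "w $ i * (J $ i $ i * r $ i) = 0" for i
    using rw[of i] by auto
  then have "r \<bullet> (J *v w) = 0" "w \<bullet> (J *v r) = 0"
    unfolding inner_vec_def
    by (simp_all only: diagonal_mat_mult_vec[OF J] inner_real_def zero sum.neutral_const)
  then have "join r w \<bullet> (Jblk J *v join r w) = 0"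
    by (simp add: Jblk_def block_mult_join inner_join)
  with Q_part show ?thesis
    by (simp add: matrix_vector_mult_add_rdistrib inner_add_right)
qed

text \<open>\<open>E_mat\<close> sends a point \<open>(q, relu q)\<close> of the graph of the ReLU to the pair
  \<open>(relu q - q, relu q)\<close> of complementary nonnegative vectors.\<close>
lemma Pi_NN_relu_graph_nonneg:
  assumes "Pm \<in> Pi_NN"
  shows "0 \<le> join q (relu q) \<bullet> (Pm *v join q (relu q))"
proof -
  obtain J Q where Pm: "Pm = transpose E_mat ** (Q + Jblk J) ** E_mat"
    and J: "diagonal_mat J" and Q: "entrywise_nonneg Q"
    using assms unfolding Pi_NN_def by blast
  have "E_mat *v join q (relu q) = join (relu q - q) (relu q)"
    by (simp add: E_mat_def block_mult_join matrix_vector_uminus_left)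
  moreover have "0 \<le> (relu q - q) $ i" "0 \<le> relu q $ i" "(relu q - q) $ i * relu q $ i = 0"
    for i by (simp_all add: relu_def max_def)
  ultimately show ?thesis
    unfolding Pm quadratic_form_congruence by (simp add: complementary_multiplier_nonneg J Q)
qed

section \<open>Exponential stability from the primal LMI\<close>

definition lmi_matrix ::
  "real^'n::finite^'n \<Rightarrow> real^'m::finite^'n \<Rightarrow> real^'n^'m \<Rightarrow> real^'m^'m
   \<Rightarrow> real^'n^'n \<Rightarrow> real^('m + 'm)^('m + 'm) \<Rightarrow> real^('n + 'm)^('n + 'm)" where
  "lmi_matrix A B C D P Pm = block (P ** A + transpose A ** P) (P ** B) (transpose B ** P) 0
     + transpose (block C D 0 (mat 1)) ** Pm ** block C D 0 (mat 1)"

lemma primal_LMI_feasible_iff: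
  "primal_LMI_feasible A B C D
     \<longleftrightarrow> (\<exists>P Pm. pos_def P \<and> Pm \<in> Pi_NN \<and> neg_def (lmi_matrix A B C D P Pm))"
  by (simp add: primal_LMI_feasible_def lmi_matrix_def)

lemma quadratic_form_lyapunov_block:
  fixes P :: "real^'n::finite^'n"
  assumes "symmetric_mat P"
  shows "join x w \<bullet> (block (P ** A + transpose A ** P) (P ** B) (transpose B ** P) 0 *v join x w)
         = 2 * (x \<bullet> (P *v (A *v x + B *v w)))"
proof -
  have "join x w \<bullet> (block (P ** A + transpose A ** P) (P ** B) (transpose B ** P) 0 *v join x w)
     = x \<bullet> (P *v (A *v x)) + x \<bullet> (transpose A *v (P *v x))
       + x \<bullet> (P *v (B *v w)) + w \<bullet> (transpose B *v (P *v x))"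
    by (simp add: block_mult_join inner_join matrix_vector_mult_add_rdistrib inner_add_right
        matrix_vector_mul_assoc[symmetric] del: transpose_matrix_vector)
  also have "x \<bullet> (transpose A *v (P *v x)) = x \<bullet> (P *v (A *v x))"
    by (simp only: inner_transpose_matrix_vector symmetric_inner[OF assms, of "A *v x" x])
  also have "w \<bullet> (transpose B *v (P *v x)) = x \<bullet> (P *v (B *v w))"
    by (simp only: inner_transpose_matrix_vector symmetric_inner[OF assms, of "B *v w" x])
  finally show ?thesis by (simp add: matrix_vector_right_distrib inner_add_right)
qed

lemma primal_LMI_decrease:
  fixes A :: "real^'n::finite^'n" and B :: "real^'m::finite^'n" and C :: "real^'n^'m"
    and D :: "real^'m^'m"
  assumes nD: "spec_norm D < 1" and P: "pos_def P" and Pm: "Pm \<in> Pi_NN"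
    and F: "neg_def (lmi_matrix A B C D P Pm)"
  obtains e where "e > 0"
    "\<And>x. 2 * (x \<bullet> (P *v (A *v x + B *v nonlin D (C *v x)))) \<le> - e * norm x ^ 2"
proof -
  obtain e where e: "e > 0" "\<And>z. e * norm z ^ 2 \<le> z \<bullet> (- lmi_matrix A B C D P Pm *v z)"
    using quadratic_form_coercive[of "- lmi_matrix A B C D P Pm"] F
    by (auto simp: neg_def_iff_pos_def_uminus pos_def_def)
  have dec: "2 * (x \<bullet> (P *v (A *v x + B *v nonlin D (C *v x)))) \<le> - e * norm x ^ 2" for x
  proof -
    define z where "z = join x (nonlin D (C *v x))"
    define M where "M = block C D 0 (mat 1)"
    have "z \<bullet> (lmi_matrix A B C D P Pm *v z)
        = 2 * (x \<bullet> (P *v (A *v x + B *v nonlin D (C *v x)))) + (M *v z) \<bullet> (Pm *v (M *v z))"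
      using P unfolding lmi_matrix_def z_def M_def pos_def_def
      by (simp only: matrix_vector_mult_add_rdistrib inner_add_right quadratic_form_congruence
          quadratic_form_lyapunov_block)
    moreover have "0 \<le> (M *v z) \<bullet> (Pm *v (M *v z))"
      unfolding M_def z_def output_map_nonlin[OF nD] by (rule Pi_NN_relu_graph_nonneg[OF Pm])
    moreover have "e * norm x ^ 2 \<le> e * norm z ^ 2"
      using e(1) by (simp add: z_def norm_join_power2)
    moreover have "e * norm z ^ 2 \<le> - (z \<bullet> (lmi_matrix A B C D P Pm *v z))"
      using e(2)[of z] by (simp add: matrix_vector_uminus_left)
    ultimately show ?thesis by linarith
  qed
  show ?thesis using e(1) dec by (rule that)
qed

lemma DERIV_within_nonpos_imp_nonincreasing:
  fixes W :: "real \<Rightarrow> real"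
  assumes deriv: "\<And>t. t \<ge> 0 \<Longrightarrow> \<exists>y. (W has_real_derivative y) (at t within {0..}) \<and> y \<le> 0"
    and "T \<ge> 0"
  shows "W T \<le> W 0"
proof (rule DERIV_nonpos_imp_decreasing_open[OF \<open>T \<ge> 0\<close>])
  fix t :: real assume t: "0 < t" "t < T"
  obtain y where y: "(W has_real_derivative y) (at t within {0..})" "y \<le> 0"
    using deriv[of t] t by auto
  have "(W has_real_derivative y) (at t within {0<..})" by (rule DERIV_subset[OF y(1)]) auto
  then have "(W has_real_derivative y) (at t)" using t at_within_open[of t "{0<..}"] by simp
  then show "\<exists>y. (W has_real_derivative y) (at t) \<and> y \<le> 0" using y(2) by blast
next
  show "continuous_on {0..T} W"
    unfolding continuous_on_eq_continuous_within
  proof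
    fix t assume "t \<in> {0..T}"
    then obtain y where "(W has_real_derivative y) (at t within {0..})" using deriv by fastforce
    then have "continuous (at t within {0..}) W" by (rule DERIV_continuous)
    then show "continuous (at t within {0..T}) W" by (rule continuous_within_subset) auto
  qed
qed

lemma differential_inequality_exp_bound:
  fixes V :: "real \<Rightarrow> real"
  assumes deriv: "\<And>t. t \<ge> 0 \<Longrightarrow> \<exists>V'. (V has_real_derivative V') (at t within {0..}) \<and> V' \<le> - c * V t"
    and "t \<ge> 0"
  shows "V t \<le> exp (- c * t) * V 0"
proof -
  have "exp (c * t) * V t \<le> exp (c * 0) * V 0"
  proof (rule DERIV_within_nonpos_imp_nonincreasing[OF _ \<open>t \<ge> 0\<close>])
    fix s :: real assume "s \<ge> 0"
    then obtain V' where V': "(V has_real_derivative V') (at s within {0..})" "V' \<le> - c * V s"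
      using deriv by blast
    have "((\<lambda>t. exp (c * t)) has_real_derivative exp (c * s) * c) (at s within {0..})"
      by (auto intro!: derivative_eq_intros)
    from DERIV_mult[OF this V'(1)]
    have "((\<lambda>t. exp (c * t) * V t) has_real_derivative exp (c * s) * (c * V s + V'))
        (at s within {0..})"
      by (rule DERIV_cong) (simp add: algebra_simps)
    moreover have "exp (c * s) * (c * V s + V') \<le> 0"
      using V'(2) by (intro mult_nonneg_nonpos) simp_all
    ultimately show "\<exists>y. ((\<lambda>t. exp (c * t) * V t) has_real_derivative y) (at s within {0..}) \<and> y \<le> 0"
      by blast
  qed
  then show ?thesis by (simp add: exp_minus field_simps)
qed

lemma has_real_derivative_quadratic_form:
  fixes P :: "real^'n::finite^'n"
  assumes "symmetric_mat P" and "(x has_vector_derivative x') (at t within S)"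
  shows "((\<lambda>t. x t \<bullet> (P *v x t)) has_real_derivative 2 * (x t \<bullet> (P *v x'))) (at t within S)"
proof -
  have "((\<lambda>t. P *v x t) has_vector_derivative (P *v x')) (at t within S)"
    by (rule bounded_linear.has_vector_derivative[OF matrix_vector_mul_bounded_linear assms(2)])
  from bounded_bilinear.has_vector_derivative[OF bounded_bilinear_inner assms(2) this]
  have "((\<lambda>t. x t \<bullet> (P *v x t)) has_vector_derivative (x t \<bullet> (P *v x') + x' \<bullet> (P *v x t)))
      (at t within S)" .
  moreover have "x t \<bullet> (P *v x') + x' \<bullet> (P *v x t) = 2 * (x t \<bullet> (P *v x'))"
    using symmetric_inner[OF assms(1), of x' "x t"] by simp
  ultimately show ?thesis by (simp add: has_real_derivative_iff_has_vector_derivative)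
qed

lemma quadratic_Lyapunov_exponential_decay:
  fixes f :: "real^'n::finite \<Rightarrow> real^'n" and P :: "real^'n^'n"
  assumes P: "pos_def P" and "e > 0" and decrease: "\<And>x. 2 * (x \<bullet> (P *v f x)) \<le> - e * norm x ^ 2"
  obtains K c where "K > 0" "c > 0"
    "\<And>x t. (\<And>s. s \<ge> 0 \<Longrightarrow> (x has_vector_derivative f (x s)) (at s within {0..})) \<Longrightarrow> t \<ge> 0
      \<Longrightarrow> norm (x t) ^ 2 \<le> K * norm (x 0) ^ 2 * exp (- c * t)"
proof -
  obtain m where m: "m > 0" "\<And>x. m * norm x ^ 2 \<le> x \<bullet> (P *v x)"
    using quadratic_form_coercive[of P] P unfolding pos_def_def by blast
  define M where "M = onorm ((*v) P) + 1"
  have M: "M > 0" "\<And>x. x \<bullet> (P *v x) \<le> M * norm x ^ 2"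
    using onorm_pos_le[OF matrix_vector_mul_bounded_linear, of P]
      quadratic_form_bounded[of _ P] abs_le_D1
    by (fastforce simp: M_def intro: order_trans mult_right_mono)+
  define c where "c = e / M"
  have c: "c > 0" using \<open>e > 0\<close> M(1) by (simp add: c_def)
  have "norm (x t) ^ 2 \<le> M / m * norm (x 0) ^ 2 * exp (- c * t)"
    if sol: "\<And>s. s \<ge> 0 \<Longrightarrow> (x has_vector_derivative f (x s)) (at s within {0..})" and "t \<ge> 0"
    for x t
  proof -
    define V where "V = (\<lambda>t. x t \<bullet> (P *v x t))"
    have "V t \<le> exp (- c * t) * V 0"
    proof (rule differential_inequality_exp_bound[OF _ \<open>t \<ge> 0\<close>])
      fix s :: real assume "s \<ge> 0"
      have "(V has_real_derivative 2 * (x s \<bullet> (P *v f (x s)))) (at s within {0..})"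
        unfolding V_def using P sol[OF \<open>s \<ge> 0\<close>]
        by (intro has_real_derivative_quadratic_form) (simp_all add: pos_def_def)
      moreover have "c * V s \<le> e * norm (x s) ^ 2"
        using M(2)[of "x s"] c M(1) by (simp add: V_def c_def field_simps)
      then have "2 * (x s \<bullet> (P *v f (x s))) \<le> - c * V s"
        using decrease[of "x s"] by linarith
      ultimately show "\<exists>V'. (V has_real_derivative V') (at s within {0..}) \<and> V' \<le> - c * V s"
        by blast
    qed
    then have "m * norm (x t) ^ 2 \<le> exp (- c * t) * (M * norm (x 0) ^ 2)"
      using m(2)[of "x t"] M(2)[of "x 0"] unfolding V_def
      by (meson exp_ge_zero mult_left_mono order_trans)
    then show ?thesis using m(1) by (simp add: field_simps)
  qed
  moreover have "M / m > 0" using M(1) m(1) by simp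
  ultimately show ?thesis using c that by blast
qed

lemma globally_asymptotically_stableI:
  assumes K: "K > 0" and c: "c > 0"
    and bound: "\<And>x t. is_solution A B C D x \<Longrightarrow> t \<ge> 0
      \<Longrightarrow> norm (x t) ^ 2 \<le> K * norm (x 0) ^ 2 * exp (- c * t)"
  shows "globally_asymptotically_stable A B C D"
  unfolding globally_asymptotically_stable_def
proof (intro conjI allI impI)
  fix \<epsilon> :: real assume "\<epsilon> > 0"
  show "\<exists>\<delta>>0. \<forall>x. is_solution A B C D x \<and> norm (x 0) < \<delta> \<longrightarrow> (\<forall>t\<ge>0. norm (x t) < \<epsilon>)"
  proof (intro exI[of _ "\<epsilon> / sqrt K"] conjI allI impI)
    show "\<epsilon> / sqrt K > 0" using \<open>\<epsilon> > 0\<close> K by simp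
    fix x and t :: real
    assume x: "is_solution A B C D x \<and> norm (x 0) < \<epsilon> / sqrt K" and "t \<ge> 0"
    have "norm (x t) ^ 2 \<le> K * norm (x 0) ^ 2 * exp (- c * t)" using bound x \<open>t \<ge> 0\<close> by blast
    also have "\<dots> \<le> K * norm (x 0) ^ 2"
      using c K \<open>t \<ge> 0\<close> by (intro mult_left_le) simp_all
    also have "\<dots> < K * (\<epsilon> / sqrt K) ^ 2"
      using K x by (intro mult_strict_left_mono power_strict_mono) auto
    also have "\<dots> = \<epsilon> ^ 2" using K by (simp add: power_divide)
    finally show "norm (x t) < \<epsilon>" using \<open>\<epsilon> > 0\<close> by (meson power_less_imp_less_base less_imp_le)
  qed
next
  fix x assume x: "is_solution A B C D x"
  have "((\<lambda>t. exp (- c * t)) \<longlongrightarrow> 0) at_top" using c by real_asymp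
  then have "((\<lambda>t. K * norm (x 0) ^ 2 * exp (- c * t)) \<longlongrightarrow> 0) at_top"
    by (rule tendsto_mult_right_zero)
  then have "((\<lambda>t. norm (x t) ^ 2) \<longlongrightarrow> 0) at_top"
    by (rule Lim_null_comparison[rotated])
       (use bound[OF x] in \<open>auto intro: eventually_mono[OF eventually_ge_at_top[of 0]]\<close>)
  then have "((\<lambda>t. sqrt (norm (x t) ^ 2)) \<longlongrightarrow> sqrt 0) at_top" by (rule tendsto_real_sqrt)
  then show "(x \<longlongrightarrow> 0) at_top" by (simp add: tendsto_norm_zero_iff)
qed

theorem primal_LMI_imp_globally_asymptotically_stable:
  fixes A :: "real^'n::finite^'n" and B :: "real^'m::finite^'n" and C :: "real^'n^'m"
    and D :: "real^'m^'m"
  assumes "spec_norm D < 1" and "primal_LMI_feasible A B C D"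
  shows "globally_asymptotically_stable A B C D"
proof -
  obtain P Pm where P: "pos_def P" and Pm: "Pm \<in> Pi_NN"
    and F: "neg_def (lmi_matrix A B C D P Pm)"
    using assms(2) unfolding primal_LMI_feasible_iff by blast
  obtain e where "e > 0"
    and "\<And>x. 2 * (x \<bullet> (P *v (A *v x + B *v nonlin D (C *v x)))) \<le> - e * norm x ^ 2"
    using primal_LMI_decrease[OF assms(1) P Pm F] by blast
  then obtain K c where "K > 0" "c > 0" and bound: "\<And>x t.
      (\<And>s. s \<ge> 0 \<Longrightarrow> (x has_vector_derivative A *v x s + B *v nonlin D (C *v x s)) (at s within {0..}))
      \<Longrightarrow> t \<ge> 0 \<Longrightarrow> norm (x t) ^ 2 \<le> K * norm (x 0) ^ 2 * exp (- c * t)"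
    using quadratic_Lyapunov_exponential_decay[OF P, of e "\<lambda>x. A *v x + B *v nonlin D (C *v x)"]
    by blast
  show ?thesis
    by (rule globally_asymptotically_stableI[OF \<open>K > 0\<close> \<open>c > 0\<close>], rule bound)
      (auto simp: is_solution_def)
qed

section \<open>Duality\<close>

lemma lmi_matrix_add:
  "lmi_matrix A B C D (P + P') (Pm + Pm') = lmi_matrix A B C D P Pm + lmi_matrix A B C D P' Pm'"
  by (simp add: lmi_matrix_def block_add matrix_add_ldistrib matrix_add_rdistrib transpose_add
      algebra_simps)

lemma lmi_matrix_scaleR:
  "lmi_matrix A B C D (k *\<^sub>R P) (k *\<^sub>R Pm) = k *\<^sub>R lmi_matrix A B C D P Pm"
  by (simp add: lmi_matrix_def block_scaleR matrix_scaleR_left matrix_scaleR_right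
      transpose_scalar scaleR_add_right)

lemma symmetric_lmi_matrix:
  assumes P: "symmetric_mat P" and Pm: "symmetric_mat Pm"
  shows "symmetric_mat (lmi_matrix A B C D P Pm)"
proof -
  have "symmetric_mat (block (P ** A + transpose A ** P) (P ** B) (transpose B ** P) 0)"
    using P by (simp add: symmetric_mat_def transpose_block transpose_add matrix_transpose_mul
        add.commute)
  then show ?thesis
    using symmetric_congruence[OF Pm, of "block C D 0 (mat 1)"]
    unfolding lmi_matrix_def symmetric_mat_def by (simp only: transpose_add)
qed

lemma Jblk_add: "Jblk (J + J') = Jblk J + Jblk J'"
  by (simp add: Jblk_def block_add)

lemma Jblk_scaleR: "Jblk (k *\<^sub>R J) = k *\<^sub>R Jblk J"
  by (simp add: Jblk_def block_scaleR)

lemma transpose_diagonal_mat: "diagonal_mat J \<Longrightarrow> transpose J = J"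
  unfolding diagonal_mat_def by (simp add: transpose_def vec_eq_iff) metis

lemma convex_cone_Pi_NN: "convex_cone (Pi_NN :: (real^('m::finite + 'm)^('m + 'm)) set)"
  unfolding convex_cone_iff
proof (intro conjI ballI allI impI)
  show "0 \<in> Pi_NN"
    unfolding Pi_NN_def
    by (rule CollectI, rule exI[of _ 0], rule exI[of _ 0])
       (simp add: Jblk_def diagonal_mat_def symmetric_mat_def entrywise_nonneg_def)
next
  fix Pm Pm' :: "real^('m + 'm)^('m + 'm)" assume "Pm \<in> Pi_NN" "Pm' \<in> Pi_NN"
  then obtain J Q J' Q' where Pm: "Pm = transpose E_mat ** (Q + Jblk J) ** E_mat"
    and Pm': "Pm' = transpose E_mat ** (Q' + Jblk J') ** E_mat"
    and "diagonal_mat J" "symmetric_mat Q" "entrywise_nonneg Q"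
    and "diagonal_mat J'" "symmetric_mat Q'" "entrywise_nonneg Q'"
    unfolding Pi_NN_def by blast
  moreover have "Pm + Pm' = transpose E_mat ** ((Q + Q') + Jblk (J + J')) ** E_mat"
    by (simp add: Pm Pm' Jblk_add matrix_add_ldistrib matrix_add_rdistrib algebra_simps)
  ultimately have "Pm + Pm' = transpose E_mat ** ((Q + Q') + Jblk (J + J')) ** E_mat"
    "diagonal_mat (J + J')" "symmetric_mat (Q + Q')" "entrywise_nonneg (Q + Q')"
    by (simp_all add: diagonal_mat_def symmetric_mat_def entrywise_nonneg_def transpose_add)
  then show "Pm + Pm' \<in> Pi_NN" unfolding Pi_NN_def by blast
next
  fix Pm :: "real^('m + 'm)^('m + 'm)" and k :: real assume "Pm \<in> Pi_NN" "0 \<le> k"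
  then obtain J Q where Pm: "Pm = transpose E_mat ** (Q + Jblk J) ** E_mat"
    and "diagonal_mat J" "symmetric_mat Q" "entrywise_nonneg Q"
    unfolding Pi_NN_def by blast
  moreover have "k *\<^sub>R Pm = transpose E_mat ** (k *\<^sub>R Q + Jblk (k *\<^sub>R J)) ** E_mat"
    by (simp add: Pm Jblk_scaleR matrix_scaleR_left matrix_scaleR_right
        scaleR_add_right[symmetric])
  ultimately have "k *\<^sub>R Pm = transpose E_mat ** (k *\<^sub>R Q + Jblk (k *\<^sub>R J)) ** E_mat"
    "diagonal_mat (k *\<^sub>R J)" "symmetric_mat (k *\<^sub>R Q)" "entrywise_nonneg (k *\<^sub>R Q)"
    using \<open>0 \<le> k\<close>
    by (simp_all add: diagonal_mat_def symmetric_mat_def entrywise_nonneg_def transpose_scalar)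
  then show "k *\<^sub>R Pm \<in> Pi_NN" unfolding Pi_NN_def by blast
qed

lemma symmetric_Pi_NN:
  fixes Pm :: "real^('m::finite + 'm)^('m + 'm)"
  shows "Pm \<in> Pi_NN \<Longrightarrow> symmetric_mat Pm"
  unfolding Pi_NN_def
proof clarify
  fix J :: "real^'m^'m" and Q :: "real^('m + 'm)^('m + 'm)"
  assume "diagonal_mat J" "symmetric_mat Q"
  then have "symmetric_mat (Q + Jblk J)"
    by (simp add: symmetric_mat_def Jblk_def transpose_add transpose_block transpose_diagonal_mat)
  then show "symmetric_mat (transpose E_mat ** (Q + Jblk J) ** E_mat)"
    by (rule symmetric_congruence)
qed

lemma inner_lyapunov_block:
  fixes H :: "real^('n::finite + 'm::finite)^('n + 'm)" and P A :: "real^'n^'n"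
    and B :: "real^'m^'n"
  assumes H: "symmetric_mat H" and P: "symmetric_mat P"
  defines "W \<equiv> A ** blk11 H + B ** transpose (blk12 H)"
  shows "block (P ** A + transpose A ** P) (P ** B) (transpose B ** P) 0 \<bullet> H
       = (W + transpose W) \<bullet> P"
proof -
  let ?H11 = "blk11 H" and ?H12 = "blk12 H"
  have H21: "blk21 H = transpose ?H12"
    using symmetric_mat_entry[OF H] by (simp add: blk12_def blk21_def transpose_def vec_eq_iff)
  have H11: "transpose ?H11 = ?H11"
    using symmetric_mat_entry[OF H] by (simp add: blk11_def transpose_def vec_eq_iff)
  have P': "transpose P = P" using P by (simp add: symmetric_mat_def)
  have "(B ** transpose ?H12) \<bullet> P = (B ** transpose ?H12) \<bullet> transpose P"
    by (simp only: P')
  also have "\<dots> = (?H12 ** transpose B) \<bullet> P"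
    by (simp only: inner_transpose_swap[symmetric] matrix_transpose_mul transpose_transpose)
  finally have BH: "(B ** transpose ?H12) \<bullet> P = (?H12 ** transpose B) \<bullet> P" .
  have "block (P ** A + transpose A ** P) (P ** B) (transpose B ** P) 0 \<bullet> H
      = (P ** A) \<bullet> ?H11 + (transpose A ** P) \<bullet> ?H11 + (P ** B) \<bullet> ?H12
        + (transpose B ** P) \<bullet> transpose ?H12"
    by (subst block_blk[of H, symmetric]) (simp add: inner_block H21 inner_add_left)
  also have "(P ** A) \<bullet> ?H11 = (?H11 ** transpose A) \<bullet> P"
    by (simp only: inner_commute[of "P ** A"] inner_matrix_mult_right)
  also have "(transpose A ** P) \<bullet> ?H11 = (A ** ?H11) \<bullet> P"
    by (simp only: inner_commute[of "transpose A ** P"] inner_matrix_mult_left transpose_transpose)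
  also have "(P ** B) \<bullet> ?H12 = (?H12 ** transpose B) \<bullet> P"
    by (simp only: inner_commute[of "P ** B"] inner_matrix_mult_right)
  also have "(transpose B ** P) \<bullet> transpose ?H12 = (?H12 ** transpose B) \<bullet> P"
    by (simp only: inner_transpose_swap[symmetric] matrix_transpose_mul transpose_transpose P'
        inner_commute[of "P ** B"] inner_matrix_mult_right)
  finally show ?thesis
    by (simp add: W_def transpose_add matrix_transpose_mul H11 BH inner_add_left)
qed

lemma E_mat_output_matrix: "E_mat ** block C D 0 (mat 1) = block (- C) (mat 1 - D) 0 (mat 1)"
  by (simp add: E_mat_def block_mult matrix_uminus_left algebra_simps)

lemma lmi_matrix_zero_left:
  "lmi_matrix A B C D 0 Pm = transpose (block C D 0 (mat 1)) ** Pm ** block C D 0 (mat 1)"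
  by (simp add: lmi_matrix_def)

lemma inner_multiplier_term:
  fixes H :: "real^('n::finite + 'm::finite)^('n + 'm)" and C :: "real^'n^'m"
    and D :: "real^'m^'m"
  defines "N \<equiv> block (- C) (mat 1 - D) 0 (mat 1)"
  shows "H \<bullet> lmi_matrix A B C D 0 (transpose E_mat ** G ** E_mat) = (N ** H ** transpose N) \<bullet> G"
proof -
  have "lmi_matrix A B C D 0 (transpose E_mat ** G ** E_mat) = transpose N ** G ** N"
    by (simp add: lmi_matrix_zero_left N_def E_mat_output_matrix[symmetric] matrix_transpose_mul
        matrix_mul_assoc)
  then show ?thesis by (simp add: inner_congruence)
qed

lemma blk12_output_congruence:
  fixes H :: "real^('n::finite + 'm::finite)^('n + 'm)" and C :: "real^'n^'m"
    and D :: "real^'m^'m"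
  shows "blk12 (block (- C) (mat 1 - D) 0 (mat 1) ** H ** transpose (block (- C) (mat 1 - D) 0 (mat 1)))
     = - (C ** blk12 H) + (mat 1 - D) ** blk22 H"
  by (subst block_blk[of H, symmetric]) (simp add: transpose_block block_mult matrix_uminus_left)

lemma inner_Jblk: "X \<bullet> Jblk J = blk12 X \<bullet> J + blk21 X \<bullet> J"
  by (subst block_blk[of X, symmetric]) (simp add: Jblk_def inner_block)

lemma inner_diagonal_mat_zero:
  assumes "diagonal_mat J" and "\<And>i. Y $ i $ i = 0"
  shows "Y \<bullet> J = 0"
proof -
  have "Y $ i $ j * J $ i $ j = 0" for i j
    using assms unfolding diagonal_mat_def by (cases "i = j") auto
  then show ?thesis unfolding inner_matrix by (simp only: sum.neutral_const)
qed

lemma blk21_eq_blk12_diagonal: "symmetric_mat X \<Longrightarrow> blk21 X $ k $ k = blk12 X $ k $ k"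
  using symmetric_mat_entry[of X "Inl k" "Inr k"] by (simp add: blk12_def blk21_def)

lemma inner_multiplier_nonneg:
  fixes X :: "real^('m::finite + 'm)^('m + 'm)"
  assumes "symmetric_mat X" "entrywise_nonneg X" "\<And>k. blk12 X $ k $ k = 0"
    and "entrywise_nonneg Q" "diagonal_mat J"
  shows "0 \<le> X \<bullet> (Q + Jblk J)"
proof -
  have "0 \<le> X \<bullet> Q"
    using assms(2,4) unfolding inner_matrix by (auto simp: entrywise_nonneg_def intro!: sum_nonneg)
  moreover have "X \<bullet> Jblk J = 0"
    using assms(3,5) blk21_eq_blk12_diagonal[OF assms(1)]
    by (simp add: inner_Jblk inner_diagonal_mat_zero)
  ultimately show ?thesis by (simp add: inner_add_right)
qed

text \<open>Conversely, testing against \<open>Q = U + U'\<close> for a matrix unit \<open>U\<close> and against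
  \<open>J = \<plusminus>U\<close> recovers these conditions.\<close>
lemma multiplier_dual_cone_conditions:
  fixes X :: "real^('m::finite + 'm)^('m + 'm)"
  assumes X: "symmetric_mat X"
    and dual: "\<And>Q J. symmetric_mat Q \<Longrightarrow> entrywise_nonneg Q \<Longrightarrow> diagonal_mat J
      \<Longrightarrow> 0 \<le> X \<bullet> (Q + Jblk J)"
  shows "entrywise_nonneg X" "blk12 X $ k $ k = 0"
proof -
  have zero: "symmetric_mat (0::real^('m + 'm)^('m + 'm))"
    "entrywise_nonneg (0::real^('m + 'm)^('m + 'm))" "diagonal_mat (0::real^'m^'m)"
    by (simp_all add: symmetric_mat_def entrywise_nonneg_def diagonal_mat_def)
  have "0 \<le> X $ i $ j" for i j
  proof -
    define U :: "real^('m + 'm)^('m + 'm)" where "U = axis i (axis j 1)"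
    have "symmetric_mat (U + transpose U)"
      by (simp add: symmetric_mat_def transpose_add add.commute)
    moreover have "entrywise_nonneg (U + transpose U)"
      by (simp add: entrywise_nonneg_def U_def transpose_def axis_def)
    ultimately have "0 \<le> X \<bullet> (U + transpose U + Jblk 0)" using dual zero(3) by blast
    moreover have "X \<bullet> transpose U = X \<bullet> U"
      using inner_transpose_swap[of X U] X by (simp add: symmetric_mat_def)
    ultimately show ?thesis by (simp add: Jblk_def inner_add_right U_def inner_unit_matrix)
  qed
  then show "entrywise_nonneg X" by (simp add: entrywise_nonneg_def)
  define U :: "real^'m^'m" where "U = axis k (axis k 1)"
  have "diagonal_mat U" "diagonal_mat (- U)" by (auto simp: diagonal_mat_def U_def axis_def)
  then have "0 \<le> X \<bullet> (0 + Jblk U)" "0 \<le> X \<bullet> (0 + Jblk (- U))"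
    using dual zero(1,2) by blast+
  then show "blk12 X $ k $ k = 0"
    by (simp add: inner_Jblk blk21_eq_blk12_diagonal[OF X] U_def inner_unit_matrix)
qed

theorem dual_LMI_imp_not_primal:
  fixes A :: "real^'n::finite^'n" and B :: "real^'m::finite^'n" and C :: "real^'n^'m"
    and D :: "real^'m^'m"
  assumes "dual_LMI_feasible A B C D"
  shows "\<not> primal_LMI_feasible A B C D"
proof
  assume "primal_LMI_feasible A B C D"
  then obtain P Pm where P: "pos_def P" and "Pm \<in> Pi_NN" and F: "neg_def (lmi_matrix A B C D P Pm)"
    unfolding primal_LMI_feasible_iff by blast
  then obtain J Q where Pm: "Pm = transpose E_mat ** (Q + Jblk J) ** E_mat"
    and JQ: "symmetric_mat Q" "entrywise_nonneg Q" "diagonal_mat J"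
    unfolding Pi_NN_def by blast
  define N where "N = block (- C) (mat 1 - D) 0 (mat 1)"
  obtain H :: "real^('n + 'm)^('n + 'm)" where "H \<noteq> 0" and H: "pos_semidef H"
    and W: "pos_semidef (A ** blk11 H + B ** transpose (blk12 H)
                         + transpose (A ** blk11 H + B ** transpose (blk12 H)))"
    and X: "entrywise_nonneg (N ** H ** transpose N)"
    and diag: "\<forall>k. (- (C ** blk12 H) + (mat 1 - D) ** blk22 H) $ k $ k = 0"
    using assms unfolding dual_LMI_feasible_def N_def by blast
  have symH: "symmetric_mat H" and symP: "symmetric_mat P"
    using H P by (simp_all add: pos_semidef_def pos_def_def)
  have "lmi_matrix A B C D P Pm \<bullet> H < 0"
    using F H \<open>H \<noteq> 0\<close> by (intro inner_pos_semidef_neg) (auto simp: neg_def_def)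
  moreover have "0 \<le> block (P ** A + transpose A ** P) (P ** B) (transpose B ** P) 0 \<bullet> H"
    unfolding inner_lyapunov_block[OF symH symP] inner_commute[of _ P]
    using pos_def_imp_nonneg_form[OF P] W by (rule inner_pos_semidef_nonneg)
  moreover have "0 \<le> H \<bullet> lmi_matrix A B C D 0 Pm"
    unfolding Pm inner_multiplier_term N_def[symmetric]
    using symmetric_congruence[OF symH, of "transpose N"] X diag JQ
    by (intro inner_multiplier_nonneg) (simp_all add: N_def blk12_output_congruence)
  moreover have "lmi_matrix A B C D P Pm \<bullet> H
      = block (P ** A + transpose A ** P) (P ** B) (transpose B ** P) 0 \<bullet> H
        + H \<bullet> lmi_matrix A B C D 0 Pm"
    by (simp add: lmi_matrix_def inner_add_left inner_commute[of H])
  ultimately show False by linarith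
qed

definition lmi_cone ::
  "real^'n::finite^'n \<Rightarrow> real^'m::finite^'n \<Rightarrow> real^'n^'m \<Rightarrow> real^'m^'m
   \<Rightarrow> ((real^'n^'n) \<times> (real^('n + 'm)^('n + 'm))) set" where
  "lmi_cone A B C D = {(S1 - P, lmi_matrix A B C D P Pm + S2) | P Pm S1 S2.
     symmetric_mat P \<and> Pm \<in> Pi_NN \<and> nonneg_form S1 \<and> nonneg_form S2}"

lemma lmi_coneI:
  "symmetric_mat P \<Longrightarrow> Pm \<in> Pi_NN \<Longrightarrow> nonneg_form S1 \<Longrightarrow> nonneg_form S2
    \<Longrightarrow> (S1 - P, lmi_matrix A B C D P Pm + S2) \<in> lmi_cone A B C D"
  unfolding lmi_cone_def by blast

lemma convex_cone_lmi_cone: "convex_cone (lmi_cone A B C D)"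
  unfolding convex_cone_iff
proof (intro conjI ballI allI impI)
  have "(0 - 0, lmi_matrix A B C D 0 0 + 0) \<in> lmi_cone A B C D"
    by (rule lmi_coneI) (simp_all add: symmetric_mat_def nonneg_form_def
        convex_cone_contains_0[OF convex_cone_Pi_NN])
  then show "0 \<in> lmi_cone A B C D" by (simp add: zero_prod_def lmi_matrix_def)
next
  fix x y assume "x \<in> lmi_cone A B C D" "y \<in> lmi_cone A B C D"
  then obtain P Pm S1 S2 P' Pm' S1' S2' where
    x: "x = (S1 - P, lmi_matrix A B C D P Pm + S2)"
    and y: "y = (S1' - P', lmi_matrix A B C D P' Pm' + S2')"
    and "symmetric_mat P" "Pm \<in> Pi_NN" "nonneg_form S1" "nonneg_form S2"
    and "symmetric_mat P'" "Pm' \<in> Pi_NN" "nonneg_form S1'" "nonneg_form S2'"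
    unfolding lmi_cone_def by blast
  then have "((S1 + S1') - (P + P'), lmi_matrix A B C D (P + P') (Pm + Pm') + (S2 + S2'))
      \<in> lmi_cone A B C D"
    by (intro lmi_coneI nonneg_form_add convex_cone_add[OF convex_cone_Pi_NN])
      (simp_all add: symmetric_mat_def transpose_add)
  moreover have "x + y = ((S1 + S1') - (P + P'), lmi_matrix A B C D (P + P') (Pm + Pm') + (S2 + S2'))"
    by (simp add: x y lmi_matrix_add)
  ultimately show "x + y \<in> lmi_cone A B C D" by simp
next
  fix x and c :: real assume "x \<in> lmi_cone A B C D" "0 \<le> c"
  then obtain P Pm S1 S2 where x: "x = (S1 - P, lmi_matrix A B C D P Pm + S2)"
    and "symmetric_mat P" "Pm \<in> Pi_NN" "nonneg_form S1" "nonneg_form S2"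
    unfolding lmi_cone_def by blast
  then have "(c *\<^sub>R S1 - c *\<^sub>R P, lmi_matrix A B C D (c *\<^sub>R P) (c *\<^sub>R Pm) + c *\<^sub>R S2)
      \<in> lmi_cone A B C D"
    using \<open>0 \<le> c\<close>
    by (intro lmi_coneI nonneg_form_scaleR convex_cone_scaleR[OF convex_cone_Pi_NN])
      (simp_all add: symmetric_mat_def transpose_scalar)
  moreover have "c *\<^sub>R x = (c *\<^sub>R S1 - c *\<^sub>R P, lmi_matrix A B C D (c *\<^sub>R P) (c *\<^sub>R Pm) + c *\<^sub>R S2)"
    by (simp add: x lmi_matrix_scaleR scaleR_diff_right scaleR_add_right)
  ultimately show "c *\<^sub>R x \<in> lmi_cone A B C D" by simp
qed

lemma primal_LMI_feasible_if_in_lmi_cone: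
  assumes "(- mat 1, - mat 1) \<in> lmi_cone A B C D"
  shows "primal_LMI_feasible A B C D"
proof -
  obtain P Pm S1 S2 where eq: "- mat 1 = S1 - P" "- mat 1 = lmi_matrix A B C D P Pm + S2"
    and P: "symmetric_mat P" and Pm: "Pm \<in> Pi_NN" and S: "nonneg_form S1" "nonneg_form S2"
    using assms unfolding lmi_cone_def by blast
  have "P - mat 1 = S1" using eq(1) by (simp add: eq_diff_eq)
  then have "pos_def P" using P S(1) by (intro pos_def_if_identity_le) simp_all
  have "- lmi_matrix A B C D P Pm - mat 1 = - mat 1 - lmi_matrix A B C D P Pm"
    by (rule minus_diff_commute)
  also have "\<dots> = S2" using eq(2) by simp
  finally have "- lmi_matrix A B C D P Pm - mat 1 = S2" .
  moreover have "symmetric_mat (- lmi_matrix A B C D P Pm)"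
    using symmetric_lmi_matrix[OF P symmetric_Pi_NN[OF Pm]]
    by (simp add: symmetric_mat_def transpose_uminus)
  ultimately have "pos_def (- lmi_matrix A B C D P Pm)"
    using S(2) by (intro pos_def_if_identity_le) simp_all
  with \<open>pos_def P\<close> show ?thesis
    unfolding primal_LMI_feasible_iff neg_def_iff_pos_def_uminus using Pm by blast
qed

lemma convex_cone_separation:
  fixes K :: "'a::euclidean_space set"
  assumes K: "convex_cone K" and "p \<notin> K"
  obtains a where "a \<noteq> 0" "\<And>k. k \<in> K \<Longrightarrow> 0 \<le> a \<bullet> k"
proof -
  have "convex ((\<lambda>k. k - p) ` K)"
    using K by (simp add: convex_cone_def convex_translation_subtract)
  moreover have "0 \<notin> (\<lambda>k. k - p) ` K" using \<open>p \<notin> K\<close> by auto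
  ultimately obtain a where "a \<noteq> 0" and a0: "\<forall>x\<in>(\<lambda>k. k - p) ` K. 0 \<le> a \<bullet> x"
    using separating_hyperplane_set_0 by blast
  have a: "a \<bullet> p \<le> a \<bullet> k" if "k \<in> K" for k
    using a0 that by (auto simp: inner_diff_right)
  have "0 \<le> a \<bullet> k" if "k \<in> K" for k
  proof (rule ccontr)
    assume neg: "\<not> 0 \<le> a \<bullet> k"
    define t where "t = (\<bar>a \<bullet> p\<bar> + 1) / - (a \<bullet> k)"
    have "t > 0" unfolding t_def using neg by (intro divide_pos_pos) auto
    then have "t *\<^sub>R k \<in> K" using convex_cone_scaleR[OF K _ that] by simp
    then have "a \<bullet> p \<le> t * (a \<bullet> k)" using a by fastforce
    also have "t * (a \<bullet> k) = - (\<bar>a \<bullet> p\<bar> + 1)" using neg by (simp add: t_def)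
    finally show False by linarith
  qed
  with \<open>a \<noteq> 0\<close> show ?thesis by (rule that)
qed

lemma symmetric_eq_if_inner_eq:
  assumes "symmetric_mat Z" "symmetric_mat Z'"
    and "\<And>P. symmetric_mat P \<Longrightarrow> Z \<bullet> P = Z' \<bullet> P"
  shows "Z = Z'"
proof -
  have "symmetric_mat (Z - Z')" using assms(1,2) by (simp add: symmetric_mat_def transpose_diff)
  then have "Z \<bullet> (Z - Z') = Z' \<bullet> (Z - Z')" by (rule assms(3))
  then have "(Z - Z') \<bullet> (Z - Z') = 0" by (simp add: inner_diff_left)
  then show ?thesis by simp
qed

lemma dual_LMI_feasibleI:
  fixes A :: "real^'n::finite^'n" and B :: "real^'m::finite^'n" and C :: "real^'n^'m"
    and D :: "real^'m^'m" and H :: "real^('n + 'm)^('n + 'm)"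
  assumes "H \<noteq> 0" "pos_semidef H"
    and "pos_semidef (A ** blk11 H + B ** transpose (blk12 H)
                      + transpose (A ** blk11 H + B ** transpose (blk12 H)))"
    and multiplier: "\<And>Pm. Pm \<in> Pi_NN \<Longrightarrow> 0 \<le> H \<bullet> lmi_matrix A B C D 0 Pm"
  shows "dual_LMI_feasible A B C D"
proof -
  define N where "N = block (- C) (mat 1 - D) 0 (mat 1)"
  have "symmetric_mat (N ** H ** transpose N)"
    using symmetric_congruence[of H "transpose N"] assms(2) by (simp add: pos_semidef_def)
  moreover have "0 \<le> (N ** H ** transpose N) \<bullet> (Q + Jblk J)"
    if "symmetric_mat Q" "entrywise_nonneg Q" "diagonal_mat J" for Q J
  proof -
    have "transpose E_mat ** (Q + Jblk J) ** E_mat \<in> Pi_NN" using that unfolding Pi_NN_def by blast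
    from multiplier[OF this] show ?thesis by (simp add: inner_multiplier_term N_def)
  qed
  ultimately have "entrywise_nonneg (N ** H ** transpose N)"
    "\<forall>k. blk12 (N ** H ** transpose N) $ k $ k = 0"
    using multiplier_dual_cone_conditions by blast+
  then show ?thesis
    unfolding dual_LMI_feasible_def
    using assms(1-3) by (intro exI[of _ H] conjI allI) (simp_all add: N_def blk12_output_congruence)
qed

lemma lyapunov_adjoint_eq:
  fixes A :: "real^'n::finite^'n" and B :: "real^'m::finite^'n" and H :: "real^('n + 'm)^('n + 'm)"
  assumes "symmetric_mat Z" "symmetric_mat H"
    and "\<And>P. symmetric_mat P \<Longrightarrow> Z \<bullet> P = H \<bullet> lmi_matrix A B C D P 0"
  shows "Z = A ** blk11 H + B ** transpose (blk12 H) + transpose (A ** blk11 H + B ** transpose (blk12 H))"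
proof (rule symmetric_eq_if_inner_eq)
  show "symmetric_mat Z" by fact
  show "symmetric_mat (A ** blk11 H + B ** transpose (blk12 H)
      + transpose (A ** blk11 H + B ** transpose (blk12 H)))"
    by (simp add: symmetric_mat_def transpose_add add.commute)
  fix P :: "real^'n^'n" assume "symmetric_mat P"
  with assms(2,3) show "Z \<bullet> P = (A ** blk11 H + B ** transpose (blk12 H)
      + transpose (A ** blk11 H + B ** transpose (blk12 H))) \<bullet> P"
    by (simp add: lmi_matrix_def inner_commute[of H] inner_lyapunov_block)
qed

lemma dual_LMI_feasible_if_separated:
  fixes A :: "real^'n::finite^'n" and B :: "real^'m::finite^'n" and C :: "real^'n^'m"
    and D :: "real^'m^'m"
  assumes "(Z, H) \<noteq> 0" and sep: "\<And>k. k \<in> lmi_cone A B C D \<Longrightarrow> 0 \<le> (Z, H) \<bullet> k"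
  shows "dual_LMI_feasible A B C D"
proof -
  have sep': "0 \<le> Z \<bullet> (S1 - P) + H \<bullet> (lmi_matrix A B C D P Pm + S2)"
    if "symmetric_mat P" "Pm \<in> Pi_NN" "nonneg_form S1" "nonneg_form S2" for P Pm S1 S2
    using sep[OF lmi_coneI[OF that]] by simp
  have zero: "symmetric_mat 0" "0 \<in> Pi_NN" "nonneg_form 0"
    using convex_cone_contains_0[OF convex_cone_Pi_NN]
    by (simp_all add: symmetric_mat_def nonneg_form_def)
  have lmi_0: "lmi_matrix A B C D 0 0 = 0" by (simp add: lmi_matrix_def)
  have "pos_semidef Z"
    by (rule pos_semidef_if_dual_nonneg) (use sep'[OF zero(1,2) _ zero(3)] lmi_0 in simp)
  have H: "pos_semidef H"
    by (rule pos_semidef_if_dual_nonneg) (use sep'[OF zero(1,2,3)] lmi_0 in simp)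
  have ZP: "Z \<bullet> P = H \<bullet> lmi_matrix A B C D P 0" if "symmetric_mat P" for P
  proof -
    have "symmetric_mat (- P)" using that by (simp add: symmetric_mat_def transpose_uminus)
    moreover have "lmi_matrix A B C D (- P) 0 = - lmi_matrix A B C D P 0"
      using lmi_matrix_scaleR[of A B C D "-1" P 0] by simp
    ultimately show ?thesis
      using sep'[OF that zero(2,3,3)] sep'[OF _ zero(2,3,3), of "- P"]
      by (simp add: inner_diff_right inner_minus_right)
  qed
  define W where "W = A ** blk11 H + B ** transpose (blk12 H)"
  have "Z = W + transpose W"
    unfolding W_def using \<open>pos_semidef Z\<close> H ZP
    by (intro lyapunov_adjoint_eq) (simp_all add: pos_semidef_def)
  moreover have "H \<noteq> 0"
  proof
    assume "H = 0"
    moreover have "blk11 (0::real^('n + 'm)^('n + 'm)) = 0" "blk12 (0::real^('n + 'm)^('n + 'm)) = 0"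
      by (simp_all add: blk11_def blk12_def vec_eq_iff)
    ultimately have "Z = 0" using \<open>Z = W + transpose W\<close> by (simp add: W_def)
    then show False using \<open>(Z, H) \<noteq> 0\<close> \<open>H = 0\<close> by (simp add: zero_prod_def)
  qed
  moreover have "0 \<le> H \<bullet> lmi_matrix A B C D 0 Pm" if "Pm \<in> Pi_NN" for Pm
    using sep'[OF zero(1) that zero(3,3)] by simp
  ultimately show ?thesis
    using \<open>pos_semidef Z\<close> H unfolding W_def by (intro dual_LMI_feasibleI) simp_all
qed

theorem not_primal_imp_dual_LMI:
  fixes A :: "real^'n::finite^'n" and B :: "real^'m::finite^'n" and C :: "real^'n^'m"
    and D :: "real^'m^'m"
  assumes "\<not> primal_LMI_feasible A B C D"
  shows "dual_LMI_feasible A B C D"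
proof -
  have "(- mat 1, - mat 1) \<notin> lmi_cone A B C D"
    using assms primal_LMI_feasible_if_in_lmi_cone by blast
  then obtain a where "a \<noteq> 0" "\<And>k. k \<in> lmi_cone A B C D \<Longrightarrow> 0 \<le> a \<bullet> k"
    using convex_cone_separation[OF convex_cone_lmi_cone] by blast
  then show ?thesis
    using dual_LMI_feasible_if_separated[of "fst a" "snd a" A B C D] by simp
qed

theorem theorem2:
  fixes A :: "real^'n^'n" and B :: "real^'m^'n" and C :: "real^'n^'m" and D :: "real^'m^'m"
  assumes "hurwitz A" and "spec_norm D < 1"
  shows "(primal_LMI_feasible A B C D \<longrightarrow> globally_asymptotically_stable A B C D)
       \<and> (\<not> primal_LMI_feasible A B C D \<longleftrightarrow> dual_LMI_feasible A B C D)"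
proof (intro conjI impI)
  assume "primal_LMI_feasible A B C D"
  then show "globally_asymptotically_stable A B C D"
    by (rule primal_LMI_imp_globally_asymptotically_stable[OF assms(2)])
next
  show "\<not> primal_LMI_feasible A B C D \<longleftrightarrow> dual_LMI_feasible A B C D"
    using not_primal_imp_dual_LMI dual_LMI_imp_not_primal by blast
qed

end
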